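(* Let $(\mathfrak g,r)$ be a triangular Lie bialgebra. For $\mu\in\mathbb R$ define $R_\mu:\mathcal D(\mathfrak g)\to\mathcal D(\mathfrak g)$ by $R_\mu(x,a^* )=(\mu r(a^* )+x,-a^* )$, and let $\tilde r_{\pm,\mu}=R_\mu\varphi^{-1}\pm\varphi^{-1}:\mathcal D(\mathfrak g)^*\to\mathcal D(\mathfrak g)$, regarded as elements of $\mathcal D(\mathfrak g)\otimes\mathcal D(\mathfrak g)$. Then for each sign, $\tilde r_{\pm,\mu}$ is a solution of the CYBE in $\mathcal D(\mathfrak g)$ whose symmetric part is invariant and invertible (as a map $\mathcal D(\mathfrak g)^*\to\mathcal D(\mathfrak g)$); thus $(\mathcal D(\mathfrak g),\tilde r_{\pm,\mu})$, with cocommutator $\delta(X)=(\mathrm{ad}(X)\otimes\mathrm{id}+\mathrm{id}\otimes\mathrm{ad}(X))\tilde r_{\pm,\mu}$, is a factorizable quasitriangular Lie bialgebra.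
   Context: $\mathfrak g$ a finite-dimensional real Lie algebra; an element $t\in V\otimes V$ is identified with $t:V^*\to V$ via $\langle t(a),b\rangle=\langle a\otimes b,t\rangle$. $(\mathfrak g,r)$ triangular: $r\in\mathfrak g\otimes\mathfrak g$ is skew-symmetric and satisfies the CYBE $[r_{12},r_{13}]+[r_{12},r_{23}]+[r_{13},r_{23}]=0$ (for $r=\sum a_i\otimes b_i$: $[r_{12},r_{13}]=\sum[a_i,a_j]\otimes b_i\otimes b_j$, $[r_{12},r_{23}]=\sum a_i\otimes[b_i,a_j]\otimes b_j$, $[r_{13},r_{23}]=\sum a_i\otimes a_j\otimes[b_i,b_j]$). Coadjoint action $\langle\mathrm{ad}^*(x)a^*,y\rangle=-\langle a^*,[x,y]\rangle$; $[a^*,b^*]_\delta=\mathrm{ad}^*(r(a^* ))b^*-\mathrm{ad}^*(r(b^* ))a^*$; $\langle\mathrm{ad}^*(a^* )x,b^*\rangle=-\langle x,[a^*,b^*]_\delta\rangle$. The Drinfeld double $\mathcal D(\mathfrak g)=\mathfrak g\oplus\mathfrak g^*$ has bracket $[(x,a^* ),(y,b^* )]=([x,y]+\mathrm{ad}^*(a^* )y-\mathrm{ad}^*(b^* )x,[a^*,b^*]_\delta+\mathrm{ad}^*(x)b^*-\mathrm{ad}^*(y)a^* )$ and the nondegenerate symmetric invariant form $\mathfrak B_p((x,a^* ),(y,b^* ))=\langle a^*,y\rangle+\langle x,b^*\rangle$; $\varphi:\mathcal D(\mathfrak g)\to\mathcal D(\mathfrak g)^*$ is defined by $\mathfrak B_p(X,Y)=\langle\varphi(X),Y\rangle$.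 Symmetric part of $t$: $(t+\sigma(t))/2$; invariant means annihilated by $\mathrm{ad}(X)\otimes\mathrm{id}+\mathrm{id}\otimes\mathrm{ad}(X)$ for all $X$. *)

theory Defs
  imports "HOL-Analysis.Analysis"
begin

text \<open>Coordinates: a finite-dimensional real vector space V is real^'i for a finite
index type 'i::finite with standard basis axis i 1; its dual V^* is identified with real^'i::finite
via the dual basis, the pairing being the dot product.  A tensor
t = sum t$i$j e_i (x) e_j in V (x) V is the matrix t :: real^'i::finite^'i::finite.\<close>

definition lie_algebra :: "(real^'i::finite \<Rightarrow> real^'i::finite \<Rightarrow> real^'i::finite) \<Rightarrow> bool" where
  "lie_algebra br \<longleftrightarrow> bilinear br \<and> (\<forall>x y. br x y = - br y x) \<and>
     (\<forall>x y z. br x (br y z) + br y (br z x) + br z (br x y) = 0)"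

text \<open>t : V^* -> V with <t(a),b> = <a (x) b, t>.\<close>
definition tmap :: "real^'i::finite^'i::finite \<Rightarrow> real^'i::finite \<Rightarrow> real^'i::finite" where
  "tmap t a = (\<chi> j. \<Sum>i\<in>UNIV. a$i * t$i$j)"

definition tensor_of :: "(real^'i::finite \<Rightarrow> real^'i::finite) \<Rightarrow> real^'i::finite^'i::finite" where
  "tensor_of f = (\<chi> i j. (f (axis i 1))$j)"

definition cybe :: "(real^'i::finite \<Rightarrow> real^'i::finite \<Rightarrow> real^'i::finite) \<Rightarrow> real^'i::finite^'i::finite \<Rightarrow> bool" where
  "cybe br t \<longleftrightarrow> (\<forall>p q s.
     (\<Sum>i\<in>UNIV. \<Sum>k\<in>UNIV. t$i$q * t$k$s * (br (axis i 1) (axis k 1))$p)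
   + (\<Sum>j\<in>UNIV. \<Sum>k\<in>UNIV. t$p$j * t$k$s * (br (axis j 1) (axis k 1))$q)
   + (\<Sum>j\<in>UNIV. \<Sum>l\<in>UNIV. t$p$j * t$q$l * (br (axis j 1) (axis l 1))$s) = 0)"

definition skew_tensor :: "real^'i::finite^'i::finite \<Rightarrow> bool" where
  "skew_tensor t \<longleftrightarrow> transpose t = - t"

definition sym_part :: "real^'i::finite^'i::finite \<Rightarrow> real^'i::finite^'i::finite" where
  "sym_part t = (1/2) *\<^sub>R (t + transpose t)"

definition ad_mat :: "(real^'i::finite \<Rightarrow> real^'i::finite \<Rightarrow> real^'i::finite) \<Rightarrow> real^'i::finite \<Rightarrow> real^'i::finite^'i::finite" where
  "ad_mat br X = (\<chi> p i. (br X (axis i 1))$p)"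

text \<open>(ad(X) (x) id + id (x) ad(X)) t = 0 for all X.\<close>
definition invariant_tensor :: "(real^'i::finite \<Rightarrow> real^'i::finite \<Rightarrow> real^'i::finite) \<Rightarrow> real^'i::finite^'i::finite \<Rightarrow> bool" where
  "invariant_tensor br t \<longleftrightarrow>
     (\<forall>X. ad_mat br X ** t + t ** transpose (ad_mat br X) = 0)"

definition coad :: "(real^'n::finite \<Rightarrow> real^'n::finite \<Rightarrow> real^'n::finite) \<Rightarrow> real^'n::finite \<Rightarrow> real^'n::finite \<Rightarrow> real^'n::finite" where
  "coad br x a = (\<chi> j. - (a \<bullet> br x (axis j 1)))"

definition dual_br :: "(real^'n::finite \<Rightarrow> real^'n::finite \<Rightarrow> real^'n::finite) \<Rightarrow> real^'n::finite^'n::finite \<Rightarrow> real^'n::finite \<Rightarrow> real^'n::finite \<Rightarrow> real^'n::finite" where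
  "dual_br br r a b = coad br (tmap r a) b - coad br (tmap r b) a"

definition coad_dual :: "(real^'n::finite \<Rightarrow> real^'n::finite \<Rightarrow> real^'n::finite) \<Rightarrow> real^'n::finite^'n::finite \<Rightarrow> real^'n::finite \<Rightarrow> real^'n::finite \<Rightarrow> real^'n::finite" where
  "coad_dual br r a x = (\<chi> j. - (x \<bullet> dual_br br r a (axis j 1)))"

text \<open>The double D(g) = g (+) g^* is realised as real^('n::finite + 'n::finite): Inl-coordinates
are the g-component, Inr-coordinates the g^*-component.\<close>
definition dpair :: "real^'n::finite \<Rightarrow> real^'n::finite \<Rightarrow> real^('n::finite + 'n::finite)" where
  "dpair x a = (\<chi> i. case i of Inl j \<Rightarrow> x$j | Inr j \<Rightarrow> a$j)"

definition dfst :: "real^('n::finite + 'n::finite) \<Rightarrow> real^'n::finite" where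
  "dfst X = (\<chi> j. X$(Inl j))"

definition dsnd :: "real^('n::finite + 'n::finite) \<Rightarrow> real^'n::finite" where
  "dsnd X = (\<chi> j. X$(Inr j))"

definition double_br :: "(real^'n::finite \<Rightarrow> real^'n::finite \<Rightarrow> real^'n::finite) \<Rightarrow> real^'n::finite^'n::finite
    \<Rightarrow> real^('n::finite + 'n::finite) \<Rightarrow> real^('n::finite + 'n::finite) \<Rightarrow> real^('n::finite + 'n::finite)" where
  "double_br br r X Y =
     (let x = dfst X; a = dsnd X; y = dfst Y; b = dsnd Y in
      dpair (br x y + coad_dual br r a y - coad_dual br r b x)
            (dual_br br r a b + coad br x b - coad br y a))"

definition Bp :: "real^('n::finite + 'n::finite) \<Rightarrow> real^('n::finite + 'n::finite) \<Rightarrow> real" where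
  "Bp X Y = dsnd X \<bullet> dfst Y + dfst X \<bullet> dsnd Y"

definition phi :: "real^('n::finite + 'n::finite) \<Rightarrow> real^('n::finite + 'n::finite)" where
  "phi X = (\<chi> k. Bp X (axis k 1))"

definition R_mu :: "real^'n::finite^'n::finite \<Rightarrow> real \<Rightarrow> real^('n::finite + 'n::finite) \<Rightarrow> real^('n::finite + 'n::finite)" where
  "R_mu r \<mu> X = dpair (\<mu> *\<^sub>R tmap r (dsnd X) + dfst X) (- dsnd X)"

definition r_tilde :: "real^'n::finite^'n::finite \<Rightarrow> real \<Rightarrow> real \<Rightarrow> real^('n::finite + 'n::finite)^('n::finite + 'n::finite)" where
  "r_tilde r s \<mu> =
     tensor_of (\<lambda>\<xi>. R_mu r \<mu> (inv phi \<xi>) + s *\<^sub>R inv phi \<xi>)"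

end

theory Submission
  imports Defs
begin

(* Proof plan.  Everything is reduced to identities between scalars of the form
   u \<bullet> [x, y], using that the standard inner product realises the pairing of g with g^*.

   1. The bracket of the double is described by one explicit pairing formula
      Z \<bullet> [X, Y]_D (inner_double_br); from it, [-,-]_D is bilinear and B_p is invariant.
   2. For t = tensor_of F, where G is the adjoint of F, the coordinate CYBE for t says that
      the trilinear form cyb_form(a, b, c) = a\<bullet>[G b, G c] + b\<bullet>[F a, G c] + c\<bullet>[F a, F b]
      vanishes on basis vectors (cybe_iff_cyb_form).
   3. r_tilde is the tensor of the map rt_map = R_mu phi + s phi.  The key computation
      (cyb_form_r_tilde) shows that its CYBE form on D equals (mu^2 - 4 mu) times the CYBE
      form of r evaluated on the g-components; the latter vanishes by the CYBE for r.
      The computation substitutes the antisymmetrisation of the bracket of g, which turns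
      it into an identity between bilinear expressions that the simplifier can normalise.
   4. Since R_mu is skew for B_p, the symmetric part of r_tilde is s times the Casimir
      tensor of B_p, i.e. the tensor of phi^{-1} = phi.  Its invariance is the invariance
      of B_p, and its map s phi is bijective. *)

lemma dfst_dpair [simp]: "dfst (dpair x a) = x"
  and dsnd_dpair [simp]: "dsnd (dpair x a) = a"
  by (auto simp: dfst_def dsnd_def dpair_def vec_eq_iff)

lemma dpair_component [simp]: "dpair x a $ Inl j = x $ j" "dpair x a $ Inr j = a $ j"
  by (simp_all add: dpair_def)

lemma double_eq_iff: "(X::real^('n::finite+'n)) = Y \<longleftrightarrow> dfst X = dfst Y \<and> dsnd X = dsnd Y"
  by (auto simp: dfst_def dsnd_def vec_eq_iff) (metis sum.exhaust)

lemma dfst_simps [simp]: "dfst (X + Y) = dfst X + dfst Y" "dfst (X - Y) = dfst X - dfst Y"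
  "dfst (- X) = - dfst X" "dfst (c *\<^sub>R X) = c *\<^sub>R dfst X" "dfst 0 = 0"
  by (auto simp: dfst_def vec_eq_iff)

lemma dsnd_simps [simp]: "dsnd (X + Y) = dsnd X + dsnd Y" "dsnd (X - Y) = dsnd X - dsnd Y"
  "dsnd (- X) = - dsnd X" "dsnd (c *\<^sub>R X) = c *\<^sub>R dsnd X" "dsnd 0 = 0"
  by (auto simp: dsnd_def vec_eq_iff)

lemma dfst_dsnd_axis:
  "dfst (axis (Inl j) 1 :: real^('n::finite+'n)) = axis j 1"
  "dfst (axis (Inr j) 1 :: real^('n::finite+'n)) = 0"
  "dsnd (axis (Inl j) 1 :: real^('n::finite+'n)) = 0"
  "dsnd (axis (Inr j) 1 :: real^('n::finite+'n)) = axis j 1"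
  by (auto simp: dfst_def dsnd_def vec_eq_iff axis_def)

lemma axis_component: "axis i 1 $ j = (if j = i then 1 else 0)"
  by (simp add: axis_def)

lemma inner_double: "(X::real^('n::finite+'n)) \<bullet> Y = dfst X \<bullet> dfst Y + dsnd X \<bullet> dsnd Y"
proof -
  have "X \<bullet> Y = (\<Sum>i\<in>(UNIV::'n set) <+> (UNIV::'n set). X$i * Y$i)"
    by (simp add: inner_vec_def)
  also have "\<dots> = dfst X \<bullet> dfst Y + dsnd X \<bullet> dsnd Y"
    by (subst sum.Plus) (auto simp: inner_vec_def dfst_def dsnd_def o_def)
  finally show ?thesis .
qed

lemma tmap_matrix: "tmap t a = transpose t *v a"
  by (simp add: tmap_def matrix_vector_mult_def transpose_def mult.commute)

lemma linear_tmap: "linear (tmap t)"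
  unfolding tmap_matrix[abs_def] by (rule matrix_vector_mul_linear)

lemma tmap_simps [simp]: "tmap t (a + b) = tmap t a + tmap t b" "tmap t (a - b) = tmap t a - tmap t b"
  "tmap t (- a) = - tmap t a" "tmap t (c *\<^sub>R a) = c *\<^sub>R tmap t a" "tmap t 0 = 0"
  using linear_tmap[of t] by (auto simp: linear_add linear_diff linear_neg linear_scale linear_0)

lemma tmap_axis: "tmap t (axis i 1) $ j = t $ i $ j"
proof -
  have "(\<Sum>k\<in>UNIV. (if k = i then 1 else 0) * t$k$j) = (\<Sum>k\<in>UNIV. if k = i then t$k$j else 0)"
    by (rule sum.cong) auto
  then show ?thesis by (simp add: tmap_def axis_def)
qed

lemma tensor_of_tmap: "tensor_of (tmap t) = t"
  by (simp add: tensor_of_def tmap_axis vec_eq_iff)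

lemma tmap_tensor_of:
  assumes "linear f" shows "tmap (tensor_of f) = f"
proof -
  have "tensor_of f = transpose (matrix f)"
    by (simp add: tensor_of_def matrix_def transpose_def)
  then show ?thesis
    using matrix_vector_mul(2)[OF assms] by (simp add: tmap_matrix[abs_def])
qed

lemma tmap_scaleR_tensor: "tmap (c *\<^sub>R t) a = c *\<^sub>R tmap t a"
  by (simp add: tmap_def vec_eq_iff sum_distrib_left algebra_simps)

lemma skew_tensor_entry:
  assumes "skew_tensor t" shows "t $ i $ j = - t $ j $ i"
proof -
  have "transpose t $ j $ i = (- t) $ j $ i" using assms by (simp add: skew_tensor_def)
  then show ?thesis by (simp add: transpose_def)
qed

lemma skew_tmap_adjoint:
  assumes "skew_tensor r" shows "c \<bullet> tmap r d = - (d \<bullet> tmap r c)"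
proof -
  have "c \<bullet> tmap r d = (\<Sum>j\<in>UNIV. \<Sum>i\<in>UNIV. c$j * (d$i * r$i$j))"
    unfolding tmap_def inner_vec_def by (simp add: sum_distrib_left)
  also have "\<dots> = (\<Sum>i\<in>UNIV. \<Sum>j\<in>UNIV. c$j * (d$i * r$i$j))" by (rule sum.swap)
  also have "\<dots> = - (\<Sum>i\<in>UNIV. \<Sum>j\<in>UNIV. d$i * (c$j * r$j$i))"
  proof -
    have "c$j * (d$i * r$i$j) = - (d$i * (c$j * r$j$i))" for i j
      using skew_tensor_entry[OF assms, of i j] by simp
    then show ?thesis by (simp add: sum_negf[symmetric])
  qed
  also have "\<dots> = - (d \<bullet> tmap r c)"
    unfolding tmap_def inner_vec_def by (simp add: sum_distrib_left)
  finally show ?thesis .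
qed

lemma linear_basis_expansion:
  fixes c :: "real^'n::finite"
  assumes "linear h" shows "h c = (\<Sum>j\<in>UNIV. c$j *\<^sub>R h (axis j 1))"
proof -
  have "h c = h (\<Sum>j\<in>UNIV. c$j *\<^sub>R axis j 1)"
    using basis_expansion[of c] by (simp add: scalar_mult_eq_scaleR)
  also have "\<dots> = (\<Sum>j\<in>UNIV. c$j *\<^sub>R h (axis j 1))"
    using assms by (simp add: linear_sum linear_scale)
  finally show ?thesis .
qed

section \<open>The bracket of the double\<close>

lemma lie_algebra_bilinear: "lie_algebra br \<Longrightarrow> bilinear br"
  and lie_algebra_skew: "lie_algebra br \<Longrightarrow> br x y = - br y x"
  unfolding lie_algebra_def by blast+

lemma coad_inner:
  assumes "bilinear br"
  shows "c \<bullet> coad br x b = - (b \<bullet> br x c)"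
proof -
  have lin: "linear (br x)" using assms by (simp add: bilinear_def)
  have "c \<bullet> coad br x b = (\<Sum>j\<in>UNIV. c$j * (- (b \<bullet> br x (axis j 1))))"
    by (simp add: coad_def inner_vec_def)
  also have "\<dots> = - (b \<bullet> (\<Sum>j\<in>UNIV. c$j *\<^sub>R br x (axis j 1)))"
    by (simp add: inner_sum_right sum_negf)
  also have "\<dots> = - (b \<bullet> br x c)" using linear_basis_expansion[OF lin, of c] by simp
  finally show ?thesis .
qed

lemma dual_br_inner:
  assumes "bilinear br"
  shows "c \<bullet> dual_br br r a b = - (b \<bullet> br (tmap r a) c) + a \<bullet> br (tmap r b) c"
  by (simp add: dual_br_def inner_diff_right coad_inner[OF assms])

lemma coad_dual_inner:
  assumes "bilinear br"
  shows "c \<bullet> coad_dual br r a y = c \<bullet> br (tmap r a) y - a \<bullet> br (tmap r c) y"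
proof -
  have lin_left: "linear (\<lambda>z. br z y)" using assms by (simp add: bilinear_def)
  have lin: "linear (\<lambda>z. br (tmap r z) y)"
    using linear_compose[OF linear_tmap lin_left] by (simp add: o_def)
  have "c \<bullet> coad_dual br r a y = (\<Sum>j\<in>UNIV. c$j * (- (y \<bullet> dual_br br r a (axis j 1))))"
    by (simp add: coad_dual_def inner_vec_def)
  also have "\<dots> = (\<Sum>j\<in>UNIV. c$j * (axis j 1 \<bullet> br (tmap r a) y - a \<bullet> br (tmap r (axis j 1)) y))"
    by (simp add: dual_br_inner[OF assms])
  also have "\<dots> = (\<Sum>j\<in>UNIV. c$j * (br (tmap r a) y $ j))
                   - a \<bullet> (\<Sum>j\<in>UNIV. c$j *\<^sub>R br (tmap r (axis j 1)) y)"
    by (simp add: inner_axis' inner_sum_right sum_subtractf algebra_simps)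
  also have "\<dots> = c \<bullet> br (tmap r a) y - a \<bullet> br (tmap r c) y"
    using linear_basis_expansion[OF lin, of c] by (simp add: inner_vec_def)
  finally show ?thesis .
qed

definition double_pairing :: "(real^'n::finite \<Rightarrow> real^'n \<Rightarrow> real^'n) \<Rightarrow> (real^'n \<Rightarrow> real^'n) \<Rightarrow>
    real^'n \<Rightarrow> real^'n \<Rightarrow> real^'n \<Rightarrow> real^'n \<Rightarrow> real^'n \<Rightarrow> real^'n \<Rightarrow> real" where
  "double_pairing br R z1 z2 x a y b =
     z1 \<bullet> br x y + z1 \<bullet> br (R a) y - a \<bullet> br (R z1) y - z1 \<bullet> br (R b) x + b \<bullet> br (R z1) x
   - b \<bullet> br (R a) z2 + a \<bullet> br (R b) z2 - b \<bullet> br x z2 + a \<bullet> br y z2"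

lemma inner_double_br:
  assumes "bilinear br"
  shows "Z \<bullet> double_br br r X Y
       = double_pairing br (tmap r) (dfst Z) (dsnd Z) (dfst X) (dsnd X) (dfst Y) (dsnd Y)"
  unfolding double_br_def Let_def double_pairing_def
  by (simp add: inner_double inner_add_right inner_diff_right coad_inner[OF assms]
      dual_br_inner[OF assms] coad_dual_inner[OF assms] algebra_simps)

lemma bilinear_double_br:
  assumes bl: "bilinear br" shows "bilinear (double_br br r)"
proof -
  note lin = bilinear_ladd[OF bl] bilinear_radd[OF bl] bilinear_lmul[OF bl] bilinear_rmul[OF bl]
    bilinear_lneg[OF bl] bilinear_rneg[OF bl] bilinear_lsub[OF bl] bilinear_rsub[OF bl]
    bilinear_lzero[OF bl] bilinear_rzero[OF bl]
  have eq: "U = V" if "\<And>Z. Z \<bullet> U = Z \<bullet> V" for U V :: "'v::real_inner"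
    using that vector_eq_ldot by blast
  have "double_br br r (X + X') Y = double_br br r X Y + double_br br r X' Y"
    "double_br br r Y (X + X') = double_br br r Y X + double_br br r Y X'"
    "double_br br r (c *\<^sub>R X) Y = c *\<^sub>R double_br br r X Y"
    "double_br br r Y (c *\<^sub>R X) = c *\<^sub>R double_br br r Y X" for c X X' Y
    by (rule eq; simp add: inner_double_br[OF bl] double_pairing_def lin inner_add_right
        inner_diff_right algebra_simps)+
  then show ?thesis unfolding bilinear_def linear_iff by blast
qed

section \<open>The form \<open>B_p\<close> and the map \<open>phi\<close>\<close>

lemma phi_eq: "phi X = dpair (dsnd X) (dfst (X::real^('n::finite+'n)))"
  unfolding double_eq_iff
  by (auto simp: phi_def Bp_def dfst_def dsnd_def vec_eq_iff axis_def inner_vec_def dpair_def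
      if_distrib cong: if_cong)

lemma phi_phi: "phi (phi X) = X"
  by (simp add: phi_eq double_eq_iff)

lemma inv_phi: "inv phi = phi"
  by (rule inv_equality) (simp_all add: phi_phi)

lemma linear_phi: "linear phi"
  by (simp add: linear_iff phi_eq double_eq_iff)

lemma Bp_phi: "Bp X Y = phi X \<bullet> Y"
  by (simp add: Bp_def phi_eq inner_double)

text \<open>\<open>B_p\<close> is invariant under the bracket of the double; only the skew-symmetry of the
  bracket of g is needed.\<close>
lemma Bp_invariant:
  assumes "lie_algebra br"
  shows "Bp Y (double_br br r X W) + Bp W (double_br br r X Y) = 0"
proof -
  have bl: "bilinear br" and skew: "\<And>x y. br x y = - br y x"
    using lie_algebra_bilinear[OF assms] lie_algebra_skew[OF assms] .
  show ?thesis
    unfolding Bp_phi inner_double_br[OF bl] phi_eq dfst_dpair dsnd_dpair double_pairing_def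
    using skew[of "dfst W" "dfst Y"] by (simp add: inner_minus_right)
qed

section \<open>The CYBE as a trilinear form\<close>

text \<open>The CYBE of \<open>t = tensor_of F\<close> paired with \<open>\<alpha> \<otimes> \<beta> \<otimes> \<gamma>\<close>, where \<open>G\<close> is the map of the
  transposed tensor.\<close>
definition cyb_form ::
    "(real^'m::finite \<Rightarrow> real^'m \<Rightarrow> real^'m) \<Rightarrow> (real^'m \<Rightarrow> real^'m) \<Rightarrow> (real^'m \<Rightarrow> real^'m)
     \<Rightarrow> real^'m \<Rightarrow> real^'m \<Rightarrow> real^'m \<Rightarrow> real" where
  "cyb_form br F G \<alpha> \<beta> \<gamma> = \<alpha> \<bullet> br (G \<beta>) (G \<gamma>) + \<beta> \<bullet> br (F \<alpha>) (G \<gamma>) + \<gamma> \<bullet> br (F \<alpha>) (F \<beta>)"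

lemma bilinear_sum_sum:
  fixes h :: "real^'m::finite \<Rightarrow> real^'m \<Rightarrow> real^'m"
  assumes "bilinear h"
  shows "h (\<Sum>i\<in>UNIV. a i *\<^sub>R u i) (\<Sum>k\<in>UNIV. b k *\<^sub>R v k)
       = (\<Sum>i\<in>UNIV. \<Sum>k\<in>UNIV. (a i * b k) *\<^sub>R h (u i) (v k))"
proof -
  interpret left: linear "\<lambda>x. h x y" for y using assms by (simp add: bilinear_def)
  interpret right: linear "\<lambda>y. h x y" for x using assms by (simp add: bilinear_def)
  show ?thesis
    by (simp add: left.sum right.sum left.scale right.scale scaleR_right.sum)
      (subst sum.swap; simp add: mult.commute)
qed

lemma cybe_iff_cyb_form:
  fixes br :: "real^'m::finite \<Rightarrow> real^'m \<Rightarrow> real^'m"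
  assumes bl: "bilinear br" and adj: "\<And>\<alpha> \<beta>. \<beta> \<bullet> F \<alpha> = \<alpha> \<bullet> G \<beta>"
  shows "cybe br (tensor_of F) \<longleftrightarrow> (\<forall>p q s. cyb_form br F G (axis p 1) (axis q 1) (axis s 1) = 0)"
proof -
  let ?t = "tensor_of F"
  have F_basis: "F (axis p 1) = (\<Sum>j\<in>UNIV. ?t$p$j *\<^sub>R axis j 1)" for p
    using basis_expansion[of "F (axis p 1)"] by (simp add: tensor_of_def scalar_mult_eq_scaleR)
  have G_basis: "G (axis q 1) = (\<Sum>i\<in>UNIV. ?t$i$q *\<^sub>R axis i 1)" for q
  proof -
    have "G (axis q 1) $ i = ?t$i$q" for i
      using adj[of "axis q 1" "axis i 1"] by (simp add: tensor_of_def inner_axis')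
    then show ?thesis using basis_expansion[of "G (axis q 1)"] by (simp add: scalar_mult_eq_scaleR)
  qed
  have form_basis: "cyb_form br F G (axis p 1) (axis q 1) (axis s 1) =
     (\<Sum>i\<in>UNIV. \<Sum>k\<in>UNIV. ?t$i$q * ?t$k$s * (br (axis i 1) (axis k 1))$p)
   + (\<Sum>j\<in>UNIV. \<Sum>k\<in>UNIV. ?t$p$j * ?t$k$s * (br (axis j 1) (axis k 1))$q)
   + (\<Sum>j\<in>UNIV. \<Sum>l\<in>UNIV. ?t$p$j * ?t$q$l * (br (axis j 1) (axis l 1))$s)" for p q s
    unfolding cyb_form_def F_basis G_basis bilinear_sum_sum[OF bl] by (simp add: inner_axis')
  show ?thesis unfolding cybe_def form_basis ..
qed

text \<open>The hypothesis on \<open>r\<close>: its CYBE form vanishes on basis vectors (the map of the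
  transposed skew tensor is \<open>- r\<close>).\<close>
lemma cyb_form_basis_of_cybe:
  assumes bl: "bilinear br" and skew: "skew_tensor r" and cybe_r: "cybe br r"
  shows "cyb_form br (tmap r) (\<lambda>b. - tmap r b) (axis p 1) (axis q 1) (axis s 1) = 0"
proof -
  have adj: "\<beta> \<bullet> tmap r \<alpha> = \<alpha> \<bullet> - tmap r \<beta>" for \<alpha> \<beta>
    using skew_tmap_adjoint[OF skew, of \<beta> \<alpha>] by simp
  show ?thesis
    using cybe_r cybe_iff_cyb_form[OF bl adj] unfolding tensor_of_tmap by blast
qed

section \<open>The CYBE for \<open>r_tilde\<close>\<close>

text \<open>The map \<open>R_mu phi + s phi\<close> whose tensor is \<open>r_tilde\<close>, and its adjoint.\<close>
definition rt_map :: "real^'n::finite^'n \<Rightarrow> real \<Rightarrow> real \<Rightarrow> real^('n+'n) \<Rightarrow> real^('n+'n)" where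
  "rt_map r s \<mu> \<xi> = dpair (\<mu> *\<^sub>R tmap r (dfst \<xi>) + (1+s) *\<^sub>R dsnd \<xi>) ((s-1) *\<^sub>R dfst \<xi>)"

definition rt_adj :: "real^'n::finite^'n \<Rightarrow> real \<Rightarrow> real \<Rightarrow> real^('n+'n) \<Rightarrow> real^('n+'n)" where
  "rt_adj r s \<mu> \<xi> = dpair (- (\<mu> *\<^sub>R tmap r (dfst \<xi>)) + (s-1) *\<^sub>R dsnd \<xi>) ((1+s) *\<^sub>R dfst \<xi>)"

lemma r_tilde_tensor: "r_tilde r s \<mu> = tensor_of (rt_map r s \<mu>)"
proof -
  have "R_mu r \<mu> (phi \<xi>) + s *\<^sub>R phi \<xi> = rt_map r s \<mu> \<xi>" for \<xi>
    by (simp add: R_mu_def phi_eq rt_map_def double_eq_iff algebra_simps)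
  then show ?thesis by (simp add: r_tilde_def inv_phi)
qed

lemma rt_adjoint:
  assumes "skew_tensor r" shows "\<beta> \<bullet> rt_map r s \<mu> \<alpha> = \<alpha> \<bullet> rt_adj r s \<mu> \<beta>"
  using skew_tmap_adjoint[OF assms, of "dfst \<beta>" "dfst \<alpha>"]
    inner_commute[of "dfst \<beta>" "dsnd \<alpha>"] inner_commute[of "dsnd \<beta>" "dfst \<alpha>"]
  by (simp add: rt_map_def rt_adj_def inner_double inner_add_right algebra_simps)

text \<open>A skew-symmetric map equals its antisymmetrisation.  Substituting the latter turns
  identities that hold modulo skew-symmetry into identities of bilinear expressions alone.\<close>
lemma skew_eq_antisymmetrisation:
  fixes br :: "'a \<Rightarrow> 'a \<Rightarrow> 'b::real_vector"
  assumes "\<And>x y. br x y = - br y x"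
  shows "br x y = (1/2) *\<^sub>R (br x y - br y x)"
  using assms[of y x] by (simp add: scaleR_2[symmetric] del: scaleR_2)

lemma cyb_form_r_tilde:
  assumes Lie: "lie_algebra br" and s: "s = 1 \<or> s = -1"
  shows "cyb_form (double_br br r) (rt_map r s \<mu>) (rt_adj r s \<mu>) \<alpha> \<beta> \<gamma>
       = (\<mu>\<^sup>2 - 4*\<mu>) * cyb_form br (tmap r) (\<lambda>b. - tmap r b) (dfst \<alpha>) (dfst \<beta>) (dfst \<gamma>)"
proof -
  have bl: "bilinear br" and skew: "\<And>x y. br x y = - br y x"
    using lie_algebra_bilinear[OF Lie] lie_algebra_skew[OF Lie] .
  define alt where "alt x y = (1/2) *\<^sub>R (br x y - br y x)" for x y
  have br_alt: "br = alt"
    unfolding alt_def by (intro ext) (rule skew_eq_antisymmetrisation[OF skew])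
  note lin = bilinear_ladd[OF bl] bilinear_radd[OF bl] bilinear_lmul[OF bl] bilinear_rmul[OF bl]
    bilinear_lneg[OF bl] bilinear_rneg[OF bl] bilinear_lsub[OF bl] bilinear_rsub[OF bl]
    bilinear_lzero[OF bl] bilinear_rzero[OF bl]
  from s show ?thesis
    unfolding cyb_form_def inner_double_br[OF bl]
    unfolding double_pairing_def rt_map_def rt_adj_def dfst_dpair dsnd_dpair
    unfolding br_alt unfolding alt_def
    by (elim disjE; simp add: lin inner_add_right inner_diff_right power2_eq_square
        algebra_simps diff_divide_distrib add_divide_distrib)
qed

lemma cybe_r_tilde:
  fixes br :: "real^'n::finite \<Rightarrow> real^'n \<Rightarrow> real^'n"
  assumes Lie: "lie_algebra br" and skew: "skew_tensor r" and cybe_r: "cybe br r"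
    and s: "s = 1 \<or> s = -1"
  shows "cybe (double_br br r) (r_tilde r s \<mu>)"
proof -
  have bl: "bilinear br" using Lie by (rule lie_algebra_bilinear)
  have zero: "cyb_form br (tmap r) (\<lambda>b. - tmap r b) x y z = 0" if "x = 0 \<or> y = 0 \<or> z = 0" for x y z
    using that by (auto simp: cyb_form_def bilinear_lzero[OF bl] bilinear_rzero[OF bl])
  have "cyb_form br (tmap r) (\<lambda>b. - tmap r b)
          (dfst (axis P 1)) (dfst (axis Q 1)) (dfst (axis T 1 :: real^('n+'n))) = 0" for P Q T
    by (cases P; cases Q; cases T)
      (simp_all add: dfst_dsnd_axis cyb_form_basis_of_cybe[OF bl skew cybe_r] zero)
  then show ?thesis
    unfolding r_tilde_tensor cybe_iff_cyb_form[OF bilinear_double_br[OF bl] rt_adjoint[OF skew]]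
    by (simp add: cyb_form_r_tilde[OF Lie s])
qed

section \<open>The symmetric part of \<open>r_tilde\<close>\<close>

definition swap_side :: "'n + 'n \<Rightarrow> 'n + 'n" where
  "swap_side = case_sum Inr Inl"

lemma swap_side_simps [simp]:
  "swap_side (Inl i) = Inr i" "swap_side (Inr i) = Inl i" "swap_side (swap_side P) = P"
  by (auto simp: swap_side_def split: sum.split)

lemma swap_side_eq_iff: "Q = swap_side P \<longleftrightarrow> P = swap_side Q"
  by auto

lemma phi_axis: "phi (axis P 1 :: real^('n::finite+'n)) = axis (swap_side P) 1"
  by (cases P) (simp_all add: phi_eq double_eq_iff dfst_dsnd_axis)

definition casimir :: "real^('n::finite+'n)^('n+'n)" where
  "casimir = tensor_of phi"

lemma casimir_entry: "casimir $ P $ Q = (if Q = swap_side P then 1 else 0)"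
proof -
  have "casimir $ P $ Q = axis (swap_side P) 1 $ Q"
    by (simp add: casimir_def tensor_of_def phi_axis)
  then show ?thesis by (simp add: axis_def)
qed

text \<open>\<open>R_mu\<close> is skew for \<open>B_p\<close>, so only \<open>s phi\<close> contributes to the symmetric part.\<close>
lemma sym_part_r_tilde:
  assumes "skew_tensor r"
  shows "sym_part (r_tilde r s \<mu>) = s *\<^sub>R casimir"
proof -
  note entries = sym_part_def r_tilde_tensor tensor_of_def transpose_def rt_map_def
    dfst_dsnd_axis casimir_entry tmap_axis axis_component
  have "sym_part (r_tilde r s \<mu>) $ P $ Q = (s *\<^sub>R casimir) $ P $ Q" for P Q
  proof (cases P; cases Q)
    fix i j assume "P = Inl i" "Q = Inl j"
    with skew_tensor_entry[OF assms, of i j] show ?thesis by (simp add: entries)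
  qed (auto simp: entries)
  then show ?thesis by (simp add: vec_eq_iff)
qed

lemma bij_tmap_casimir:
  assumes "s \<noteq> 0" shows "bij (tmap (s *\<^sub>R casimir))"
proof -
  have map_eq: "tmap (c *\<^sub>R casimir) = (\<lambda>\<xi>. c *\<^sub>R phi \<xi>)" for c
    by (simp add: fun_eq_iff tmap_scaleR_tensor casimir_def tmap_tensor_of[OF linear_phi])
  have "tmap ((1/s) *\<^sub>R casimir) \<circ> tmap (s *\<^sub>R casimir) = id"
    "tmap (s *\<^sub>R casimir) \<circ> tmap ((1/s) *\<^sub>R casimir) = id"
    using assms by (simp_all add: map_eq fun_eq_iff linear_scale[OF linear_phi] phi_phi)
  then show ?thesis by (rule o_bij)
qed

text \<open>Invariance of the Casimir tensor is the invariance of \<open>B_p\<close>, read off in coordinates.\<close>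
lemma invariant_casimir:
  fixes br :: "real^'n::finite \<Rightarrow> real^'n \<Rightarrow> real^'n"
  assumes "lie_algebra br"
  shows "invariant_tensor (double_br br r) (s *\<^sub>R casimir)"
  unfolding invariant_tensor_def
proof
  fix X :: "real^('n+'n)"
  let ?A = "ad_mat (double_br br r) X" and ?br = "double_br br r X"
  have entry: "(?A ** (s *\<^sub>R casimir)) $ P $ Q + ((s *\<^sub>R casimir) ** transpose ?A) $ P $ Q
     = s * (?br (axis (swap_side Q) 1) $ P + ?br (axis (swap_side P) 1) $ Q)" for P Q
  proof -
    have "(\<Sum>I\<in>UNIV. ?A$P$I * (s * (if Q = swap_side I then 1 else 0))) = s * ?A$P$swap_side Q"
      by (simp add: swap_side_eq_iff if_distrib cong: if_cong)
    moreover have "(\<Sum>I\<in>UNIV. (s * (if I = swap_side P then 1 else 0)) * ?A$Q$I)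
                 = (\<Sum>I\<in>UNIV. if I = swap_side P then s * ?A$Q$I else 0)"
      by (rule sum.cong) auto
    ultimately show ?thesis
      by (simp add: matrix_matrix_mult_def transpose_def casimir_entry ad_mat_def algebra_simps)
  qed
  have "?br (axis (swap_side Q) 1) $ P + ?br (axis (swap_side P) 1) $ Q = 0" for P Q
    using Bp_invariant[OF assms, of "axis (swap_side P) 1" r X "axis (swap_side Q) 1"]
    by (simp add: Bp_phi phi_axis inner_axis')
  then show "?A ** (s *\<^sub>R casimir) + (s *\<^sub>R casimir) ** transpose ?A = 0"
    by (simp add: vec_eq_iff entry)
qed

theorem proposition4p9:
  fixes br :: "real^'n \<Rightarrow> real^'n \<Rightarrow> real^'n"
    and r :: "real^'n^'n" and \<mu> s :: real
  assumes "lie_algebra br"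
    and "skew_tensor r"
    and "cybe br r"
    and "s = 1 \<or> s = -1"
  shows "cybe (double_br br r) (r_tilde r s \<mu>)
       \<and> invariant_tensor (double_br br r) (sym_part (r_tilde r s \<mu>))
       \<and> bij (tmap (sym_part (r_tilde r s \<mu>)))"
proof (intro conjI)
  show "cybe (double_br br r) (r_tilde r s \<mu>)"
    using cybe_r_tilde[OF assms] .
  show "invariant_tensor (double_br br r) (sym_part (r_tilde r s \<mu>))"
    unfolding sym_part_r_tilde[OF assms(2)] using invariant_casimir[OF assms(1)] .
  have "s \<noteq> 0" using assms(4) by auto
  then show "bij (tmap (sym_part (r_tilde r s \<mu>)))"
    unfolding sym_part_r_tilde[OF assms(2)] by (rule bij_tmap_casimir)
qed

end
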